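(* (Ennaoui–Selberg identity.) Let $f$ be an L-additive arithmetic function whose associated completely multiplicative function $h_f$ is nonzero-valued, and let $\Lambda_f$ be its generalized von Mangoldt function. Then for every integer $n>1$, $$\frac{\Lambda_f(n)f(n)}{h_f(n)}+\sum_{d\mid n}\Lambda_f(d)\Lambda_f\!\left(\frac{n}{d}\right)=\sum_{d\mid n}\mu\!\left(\frac{n}{d}\right)\frac{f^2(d)}{h_f^2(d)},$$ i.e. $\frac{f\Lambda_f}{h_f}+\Lambda_f\ast\Lambda_f=\mu\ast\left(\frac{f}{h_f}\right)^2$.
   Context: An arithmetic function $f:\mathbb{N}\to\mathbb{C}$ is L-additive if there is a completely multiplicative function $h_f$ such that $f(mn)=f(m)h_f(n)+f(n)h_f(m)$ for all positive integers $m,n$; such an $h_f$ is fixed. $\Lambda_f(n)=\frac{f(p)}{h_f(p)}$ if $n=p^k$ for some prime $p$ and integer $k\geq1$, and $0$ otherwise. $\mu$ is the Möbius function and $\ast$ is Dirichlet convolution; products and quotients of arithmetic functions are pointwise. *)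

theory Defs
  imports "HOL-Number_Theory.Number_Theory" "HOL-Computational_Algebra.Squarefree"
begin

definition completely_multiplicative :: "(nat \<Rightarrow> complex) \<Rightarrow> bool" where
  "completely_multiplicative h \<longleftrightarrow>
     h 1 = 1 \<and> (\<forall>m n. m > 0 \<longrightarrow> n > 0 \<longrightarrow> h (m * n) = h m * h n)"

definition L_additive_wrt :: "(nat \<Rightarrow> complex) \<Rightarrow> (nat \<Rightarrow> complex) \<Rightarrow> bool" where
  "L_additive_wrt f h \<longleftrightarrow> completely_multiplicative h \<and>
     (\<forall>m n. m > 0 \<longrightarrow> n > 0 \<longrightarrow> f (m * n) = f m * h n + f n * h m)"

definition gen_mangoldt :: "(nat \<Rightarrow> complex) \<Rightarrow> (nat \<Rightarrow> complex) \<Rightarrow> nat \<Rightarrow> complex" where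
  "gen_mangoldt f h n =
     (if primepow n then f (aprimedivisor n) / h (aprimedivisor n) else 0)"

definition moebius_mu :: "nat \<Rightarrow> int" where
  "moebius_mu n = (if squarefree n then (-1) ^ card (prime_factors n) else 0)"

end

theory Submission imports Defs begin

(* Proof idea: g = f/h is completely additive, and \<Lambda>_f is its von Mangoldt function,
   i.e. g = 1 * \<Lambda>_f.  Splitting g(n) = g(d) + g(n/d) in g(n)^2 = \<Sum>_{d|n} \<Lambda>_f(d) g(n)
   gives g^2 = 1 * (g \<Lambda>_f + \<Lambda>_f * \<Lambda>_f), and Moebius inversion yields the identity. *)

lemma sum_divisors_swap:
  fixes A :: "nat \<Rightarrow> nat \<Rightarrow> 'a::comm_monoid_add"
  assumes "n > 0"
  shows "(\<Sum>m | m dvd n. \<Sum>d | d dvd m. A d (m div d))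
       = (\<Sum>d | d dvd n. \<Sum>k | k dvd n div d. A d k)"
proof -
  let ?D = "{d. d dvd n}"
  have fin: "finite ?D" using assms by simp
  have "(\<Sum>m | m dvd n. \<Sum>d | d dvd m. A d (m div d))
      = (\<Sum>m\<in>?D. \<Sum>d\<in>{d\<in>?D. d dvd m}. A d (m div d))"
    by (intro sum.cong refl) (auto intro: dvd_trans)
  also have "\<dots> = (\<Sum>d\<in>?D. \<Sum>m\<in>{m\<in>?D. d dvd m}. A d (m div d))"
    by (rule sum.swap_restrict[OF fin fin])
  also have "\<dots> = (\<Sum>d | d dvd n. \<Sum>k | k dvd n div d. A d k)"
  proof (rule sum.cong[OF refl])
    fix d assume "d \<in> ?D"
    then obtain c where "n = d * c" "d > 0" using assms by (auto elim!: dvdE)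
    then show "(\<Sum>m\<in>{m\<in>?D. d dvd m}. A d (m div d)) = (\<Sum>k | k dvd n div d. A d k)"
      by (intro sum.reindex_bij_witness[of _ "\<lambda>k. d * k" "\<lambda>m. m div d"])
         (auto elim!: dvdE)
  qed
  finally show ?thesis .
qed

lemma prod_subset_prime_factors_dvd:
  fixes S :: "nat set"
  assumes "S \<subseteq> prime_factors n" "n > 0"
  shows "\<Prod>S dvd n"
proof -
  have "\<Prod>S dvd (\<Prod>p\<in>S. p ^ multiplicity p n)"
    using assms by (intro prod_dvd_prod) (auto simp: prime_factors_multiplicity)
  also have "\<dots> dvd (\<Prod>p\<in>prime_factors n. p ^ multiplicity p n)"
    using assms by (intro prod_dvd_prod_subset) auto
  also have "\<dots> = n" using assms prod_prime_factors[of n] by simp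
  finally show ?thesis .
qed

lemma
  fixes S :: "nat set"
  assumes "finite S" "\<And>p. p \<in> S \<Longrightarrow> prime p"
  shows squarefree_prod_primes: "squarefree (\<Prod>S)"
    and prime_factors_prod_primes: "prime_factors (\<Prod>S) = S"
proof -
  show "squarefree (\<Prod>S)"
    using assms by (intro squarefree_prod_coprime) (auto intro: primes_coprime squarefree_prime)
  have "prime_factors (\<Prod>S) = \<Union>((prime_factors \<circ> (\<lambda>p. p)) ` S)"
    using assms by (intro prime_factors_prod) (auto dest: prime_gt_0_nat)
  also have "\<dots> = S" using assms by (auto simp: prime_prime_factors)
  finally show "prime_factors (\<Prod>S) = S" .
qed

lemma squarefree_prod_prime_factors:
  fixes d :: nat
  assumes "squarefree d"
  shows "\<Prod>(prime_factors d) = d"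
proof -
  have "d \<noteq> 0" using assms by (rule contrapos_pn) simp
  then have "\<forall>p\<in>prime_factors d. multiplicity p d = 1"
    using assms squarefree_factorial_semiring' by blast
  then have "\<Prod>(prime_factors d) = (\<Prod>p\<in>prime_factors d. p ^ multiplicity p d)"
    by simp
  also have "\<dots> = d" using prod_prime_factors[OF \<open>d \<noteq> 0\<close>] by simp
  finally show ?thesis .
qed

(* Squarefree divisors of N correspond to subsets of its prime factors. *)
lemma sum_moebius_mu_divisors:
  assumes "N > 0"
  shows "(\<Sum>k | k dvd N. moebius_mu k) = (if N = 1 then 1 else 0)"
proof -
  let ?P = "prime_factors N"
  have "(\<Sum>k | k dvd N. moebius_mu k)
      = (\<Sum>k | k dvd N \<and> squarefree k. (-1) ^ card (prime_factors k))"
    using assms by (intro sum.mono_neutral_cong_right) (auto simp: moebius_mu_def)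
  also have "\<dots> = (\<Sum>S\<in>Pow ?P. (-1) ^ card S)"
  proof (rule sum.reindex_bij_witness[where i="\<lambda>S. \<Prod>S" and j=prime_factors])
    fix S assume S: "S \<in> Pow ?P"
    then have fin: "finite S" and primes: "\<And>p. p \<in> S \<Longrightarrow> prime p"
      by (auto intro: finite_subset)
    show "prime_factors (\<Prod>S) = S"
      using prime_factors_prod_primes[OF fin primes] .
    show "\<Prod>S \<in> {k. k dvd N \<and> squarefree k}"
      using squarefree_prod_primes[OF fin primes] prod_subset_prime_factors_dvd S assms by auto
  next
    fix k assume k: "k \<in> {k. k dvd N \<and> squarefree k}"
    then show "\<Prod>(prime_factors k) = k" by (auto intro: squarefree_prod_prime_factors)
    from k assms have "k \<noteq> 0" by auto
    with k assms show "prime_factors k \<in> Pow ?P"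
      by (auto simp: prime_factors_dvd intro: dvd_trans)
  qed simp
  also have "\<dots> = (\<Prod>p\<in>?P. 1 - 1 :: int)"
    using prod_diff_conv_sum[of ?P "\<lambda>_. 1" "\<lambda>_. 1::int"] by simp
  also have "\<dots> = (if N = 1 then 1 else 0)"
  proof (cases "N = 1")
    case False
    then obtain p where "prime p" "p dvd N" using prime_factor_nat by blast
    then have "p \<in> ?P" using assms by (auto simp: prime_factors_dvd)
    then show ?thesis using False by (auto simp: card_gt_0_iff)
  qed simp
  finally show ?thesis .
qed

lemma moebius_inversion:
  fixes F G :: "nat \<Rightarrow> 'a::comm_ring_1"
  assumes G: "\<And>m. m > 0 \<Longrightarrow> G m = (\<Sum>e | e dvd m. F e)" and "n > 0"
  shows "(\<Sum>d | d dvd n. of_int (moebius_mu (n div d)) * G d) = F n"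
proof -
  have "(\<Sum>d | d dvd n. of_int (moebius_mu (n div d)) * G d)
      = (\<Sum>d | d dvd n. \<Sum>e | e dvd d. F e * of_int (moebius_mu (n div (e * (d div e)))))"
    using \<open>n > 0\<close> by (intro sum.cong refl) (auto simp: G sum_distrib_left mult.commute)
  also have "\<dots> = (\<Sum>e | e dvd n. \<Sum>k | k dvd n div e. F e * of_int (moebius_mu (n div (e * k))))"
    by (rule sum_divisors_swap[OF \<open>n > 0\<close>])
  also have "\<dots> = (\<Sum>e | e dvd n. F e * of_int (\<Sum>k | k dvd n div e. moebius_mu (n div e div k)))"
    by (simp add: sum_distrib_left div_mult2_eq)
  also have "\<dots> = (\<Sum>e | e dvd n. if e = n then F e else 0)"
  proof (rule sum.cong[OF refl])
    fix e assume "e \<in> {e. e dvd n}"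
    then obtain q where q: "n = e * q" and "e > 0" "q > 0" using \<open>n > 0\<close> by (auto elim!: dvdE)
    have "(\<Sum>k | k dvd q. moebius_mu (q div k)) = (\<Sum>k | k dvd q. moebius_mu k)"
      using \<open>q > 0\<close>
      by (intro sum.reindex_bij_witness[of _ "(div) q" "(div) q"]) (auto elim: dvdE)
    also have "\<dots> = (if e = n then 1 else 0)"
      using q \<open>e > 0\<close> \<open>q > 0\<close> by (simp add: sum_moebius_mu_divisors)
    finally show "F e * of_int (\<Sum>k | k dvd n div e. moebius_mu (n div e div k))
                = (if e = n then F e else 0)"
      using q \<open>e > 0\<close> by (simp del: of_int_sum)
  qed
  also have "\<dots> = F n" using \<open>n > 0\<close> by (simp add: sum.delta)
  finally show ?thesis .
qed

lemma additive_prod_mset: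
  fixes g :: "nat \<Rightarrow> 'a::cancel_comm_monoid_add"
  assumes additive: "\<And>m n. m > 0 \<Longrightarrow> n > 0 \<Longrightarrow> g (m * n) = g m + g n"
    and "0 \<notin># M"
  shows "g (prod_mset M) = (\<Sum>p\<in>#M. g p)"
  using \<open>0 \<notin># M\<close>
proof (induction M)
  case empty
  have "g 1 + g 1 = g 1 + 0" using additive[of 1 1] by simp
  then show ?case by simp
next
  case (add x M)
  then have "x > 0" "prod_mset M > 0" by (auto intro: gr0I)
  with add show ?case by (simp add: additive)
qed

lemma additive_eq_sum_divisors_primepow:
  fixes g :: "nat \<Rightarrow> 'a::cancel_comm_monoid_add"
  assumes "\<And>m n. m > 0 \<Longrightarrow> n > 0 \<Longrightarrow> g (m * n) = g m + g n" and "n > 0"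
  shows "g n = (\<Sum>d | d dvd n. if primepow d then g (aprimedivisor d) else 0)"
proof -
  have "g n = g (prod_mset (prime_factorization n))" using \<open>n > 0\<close> by simp
  also have "\<dots> = (\<Sum>p\<in>#prime_factorization n. g p)"
    by (intro additive_prod_mset assms) auto
  also have "\<dots> = (\<Sum>d \<in> primepow_factors n. g (aprimedivisor d))"
    using \<open>n > 0\<close> by (simp add: sum_prime_factorization_conv_sum_primepow_factors)
  also have "\<dots> = (\<Sum>d | d dvd n. if primepow d then g (aprimedivisor d) else 0)"
    using \<open>n > 0\<close> by (intro sum.mono_neutral_cong_left) (auto simp: primepow_factors_def)
  finally show ?thesis .
qed

lemma additive_square_eq_sum_divisors:
  fixes g \<Lambda> :: "nat \<Rightarrow> 'a::comm_semiring_1"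
  assumes add: "\<And>m n. m > 0 \<Longrightarrow> n > 0 \<Longrightarrow> g (m * n) = g m + g n"
    and g: "\<And>m. m > 0 \<Longrightarrow> g m = (\<Sum>d | d dvd m. \<Lambda> d)"
    and "n > 0"
  shows "g n ^ 2 = (\<Sum>e | e dvd n. \<Lambda> e * g e + (\<Sum>d | d dvd e. \<Lambda> d * \<Lambda> (e div d)))"
proof -
  have "g n ^ 2 = (\<Sum>d | d dvd n. \<Lambda> d * g n)"
    by (simp add: g[OF \<open>n > 0\<close>] power2_eq_square sum_distrib_right)
  also have "\<dots> = (\<Sum>d | d dvd n. \<Lambda> d * g d + (\<Sum>k | k dvd n div d. \<Lambda> d * \<Lambda> k))"
  proof (rule sum.cong[OF refl])
    fix d assume "d \<in> {d. d dvd n}"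
    then obtain q where "n = d * q" and "d > 0" "q > 0" using \<open>n > 0\<close> by (auto elim!: dvdE)
    then have "g n = g d + (\<Sum>k | k dvd n div d. \<Lambda> k)" by (simp add: add g[OF \<open>q > 0\<close>])
    then show "\<Lambda> d * g n = \<Lambda> d * g d + (\<Sum>k | k dvd n div d. \<Lambda> d * \<Lambda> k)"
      by (simp add: sum_distrib_left distrib_left)
  qed
  also have "\<dots> = (\<Sum>d | d dvd n. \<Lambda> d * g d)
                 + (\<Sum>e | e dvd n. \<Sum>d | d dvd e. \<Lambda> d * \<Lambda> (e div d))"
    by (simp add: sum.distrib sum_divisors_swap[OF \<open>n > 0\<close>, of "\<lambda>d k. \<Lambda> d * \<Lambda> k"])
  finally show ?thesis by (simp add: sum.distrib)
qed

lemma L_additive_wrt_divide_additive: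
  fixes f h :: "nat \<Rightarrow> complex"
  assumes "L_additive_wrt f h" and "\<And>m. m > 0 \<Longrightarrow> h m \<noteq> 0" and "m > 0" "n > 0"
  shows "f (m * n) / h (m * n) = f m / h m + f n / h n"
proof -
  have "h (m * n) = h m * h n" and "f (m * n) = f m * h n + f n * h m"
    using assms by (auto simp: L_additive_wrt_def completely_multiplicative_def)
  moreover have "h m \<noteq> 0" "h n \<noteq> 0" using assms by auto
  ultimately show ?thesis by (simp add: field_simps)
qed

theorem theorem2p8:
  fixes f h :: "nat \<Rightarrow> complex" and n :: nat
  assumes "L_additive_wrt f h"
    and "\<And>m. m > 0 \<Longrightarrow> h m \<noteq> 0"
    and "n > 1"
  shows "gen_mangoldt f h n * f n / h n
           + (\<Sum>d | d dvd n. gen_mangoldt f h d * gen_mangoldt f h (n div d))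
         = (\<Sum>d | d dvd n. of_int (moebius_mu (n div d)) * (f d / h d)^2)"
proof -
  define g where "g d = f d / h d" for d
  define \<Lambda> where "\<Lambda> = gen_mangoldt f h"
  have \<Lambda>_eq: "\<Lambda> = (\<lambda>d. if primepow d then g (aprimedivisor d) else 0)"
    by (simp add: fun_eq_iff \<Lambda>_def gen_mangoldt_def g_def)
  have add: "g (m * k) = g m + g k" if "m > 0" "k > 0" for m k
    using L_additive_wrt_divide_additive[OF assms(1,2) that] by (simp add: g_def)
  have "g m = (\<Sum>d | d dvd m. \<Lambda> d)" if "m > 0" for m
    unfolding \<Lambda>_eq by (rule additive_eq_sum_divisors_primepow[OF add that])
  then have "g m ^ 2 = (\<Sum>e | e dvd m. \<Lambda> e * g e + (\<Sum>d | d dvd e. \<Lambda> d * \<Lambda> (e div d)))"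
    if "m > 0" for m
    using additive_square_eq_sum_divisors[OF add _ that] by blast
  then have "(\<Sum>d | d dvd n. of_int (moebius_mu (n div d)) * g d ^ 2)
           = \<Lambda> n * g n + (\<Sum>d | d dvd n. \<Lambda> d * \<Lambda> (n div d))"
    using \<open>n > 1\<close> by (intro moebius_inversion) auto
  then show ?thesis by (simp add: g_def \<Lambda>_def)
qed

end
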